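(* Let $A_0\in\mathbb R^{d\times d}$. For all $t\ge0$, $$|e^{-A_0t}|\le\sqrt{L^{A_0}}\,e^{[1-\underline\kappa'(A_0)]t},\qquad\text{where } L^{A_0}:=\inf_{Q_0}\frac{\overline\kappa(Q_0\bar Q_0^\top)}{\underline\kappa(Q_0\bar Q_0^\top)},$$ the infimum being over all invertible $Q_0\in\mathbb C^{d\times d}$ such that $A_0=Q_0J_0Q_0^{-1}$ with $J_0$ the Jordan normal form of $A_0$.
   Context: For $A\in\mathbb R^{d\times d}$: $|A|:=\sup_{|x|=|y|=1,\,x,y\in\mathbb R^d}\langle Ax,y\rangle$ (operator norm); $\underline\kappa'(A)$ denotes the smallest real part of the eigenvalues of $A$. $\bar Q_0$ is the complex conjugate of $Q_0$, so $Q_0\bar Q_0^\top$ is Hermitian positive definite; $\overline\kappa(Q_0\bar Q_0^\top)$ and $\underline\kappa(Q_0\bar Q_0^\top)$ denote its largest and smallest eigenvalues. *)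

theory Defs
  imports Complex_Main "Jordan_Normal_Form.Jordan_Normal_Form"
begin

definition mat_exp :: "real mat \<Rightarrow> real mat" where
  "mat_exp A = mat (dim_row A) (dim_col A)
     (\<lambda>(i,j). \<Sum>k. (A ^\<^sub>m k) $$ (i,j) / fact k)"

definition op_norm :: "real mat \<Rightarrow> real" where
  "op_norm A = Sup {(A *\<^sub>v x) \<bullet> y | x y.
      x \<in> carrier_vec (dim_col A) \<and> y \<in> carrier_vec (dim_row A) \<and> x \<bullet> x = 1 \<and> y \<bullet> y = 1}"

definition kappa_re_min :: "real mat \<Rightarrow> real" where
  "kappa_re_min A = Min {Re c | c. eigenvalue (map_mat complex_of_real A) c}"

definition conj_transpose :: "complex mat \<Rightarrow> complex mat" where
  "conj_transpose Q = mat (dim_col Q) (dim_row Q) (\<lambda>(i,j). cnj (Q $$ (j,i)))"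

text \<open>Largest / smallest eigenvalue of a Hermitian matrix (eigenvalues are real).\<close>
definition kappa_max :: "complex mat \<Rightarrow> real" where
  "kappa_max H = Max {Re c | c. eigenvalue H c}"

definition kappa_min :: "complex mat \<Rightarrow> real" where
  "kappa_min H = Min {Re c | c. eigenvalue H c}"

definition jordan_transforms :: "real mat \<Rightarrow> complex mat set" where
  "jordan_transforms A = {Q. \<exists>n_as Qi.
      similar_mat_wit (map_mat complex_of_real A) (jordan_matrix n_as) Q Qi}"

definition L_const :: "real mat \<Rightarrow> real" where
  "L_const A = Inf {kappa_max (Q * conj_transpose Q) / kappa_min (Q * conj_transpose Q)
                    | Q. Q \<in> jordan_transforms A}"

end

(*
  Write A0 = Q J Q^-1 with J a complex Jordan matrix. Then e^(-t A0) = Q e^(-t J) Q^-1, so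
  <e^(-t A0) x, y> = <e^(-t J) u, w> with u = Q^-1 x and w = Q^* y. Grouping the entries of
  e^(-t J) by superdiagonals gives e^(-t J) = sum_m (-t)^m/m! D N_m, where D = e^(-t diag J) has
  norm at most e^(-t kappa') and each N_m is a partial shift of norm at most 1; summing over m
  yields the factor e^t e^(-t kappa'). The Rayleigh bounds for the Hermitian matrix H = Q Q^*
  give |w|^2 <= kappa_max(H) |y|^2 and kappa_min(H) |u|^2 <= |x|^2, hence the bound with the
  ratio kappa_max(H) / kappa_min(H) for every admissible Q, and so with its infimum.
*)

theory Submission
  imports Defs "Jordan_Normal_Form.Jordan_Normal_Form_Existence" "HOL-Analysis.Convex"
begin

section \<open>Complex vectors as functions\<close>

text \<open>A vector of \<open>\<complex>\<^sup>n\<close> is represented by a function \<open>nat \<Rightarrow> complex\<close>, of which only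
  the values on \<open>{..<n}\<close> matter.\<close>

definition sq_norm :: "nat \<Rightarrow> (nat \<Rightarrow> complex) \<Rightarrow> real" where
  "sq_norm n v = (\<Sum>i<n. (cmod (v i))\<^sup>2)"

lemma sq_norm_nonneg [simp]: "0 \<le> sq_norm n v"
  unfolding sq_norm_def by (intro sum_nonneg) auto

lemma sq_norm_pos:
  assumes "i < n" and "v i \<noteq> 0"
  shows "0 < sq_norm n v"
proof -
  have "0 < (cmod (v i))\<^sup>2" using assms(2) by simp
  also have "\<dots> \<le> sq_norm n v" unfolding sq_norm_def by (rule member_le_sum) (use assms(1) in auto)
  finally show ?thesis .
qed

lemma sq_norm_Suc: "sq_norm (Suc m) z = (cmod (z 0))\<^sup>2 + sq_norm m (\<lambda>k. z (Suc k))"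
  unfolding sq_norm_def by (simp only: sum.lessThan_Suc_shift)

lemma of_real_sq_norm: "of_real (sq_norm n v) = (\<Sum>i<n. cnj (v i) * v i)"
  unfolding sq_norm_def of_real_sum by (intro sum.cong refl) (subst complex_norm_square, rule mult.commute)

lemma sum_mult_le_sqrt_sum_power2:
  fixes f g :: "'b \<Rightarrow> real"
  shows "(\<Sum>i\<in>A. f i * g i) \<le> sqrt (\<Sum>i\<in>A. (f i)\<^sup>2) * sqrt (\<Sum>i\<in>A. (g i)\<^sup>2)"
  using real_le_rsqrt[OF Cauchy_Schwarz_ineq_sum[of f g A]] real_sqrt_abs[of "sum _ _"]
  by (simp add: real_sqrt_mult)

lemma cmod_sum_le_sqrt_sq_norm:
  assumes E: "\<And>a. a < n \<Longrightarrow> cmod (E a) \<le> B" and B: "0 \<le> B"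
  shows "cmod (\<Sum>a<n. cnj (w a) * E a * v a) \<le> B * (sqrt (sq_norm n w) * sqrt (sq_norm n v))"
proof -
  have "cmod (\<Sum>a<n. cnj (w a) * E a * v a) \<le> (\<Sum>a<n. B * (cmod (w a) * cmod (v a)))"
  proof (rule order.trans[OF norm_sum sum_mono])
    fix a assume "a \<in> {..<n}"
    then show "cmod (cnj (w a) * E a * v a) \<le> B * (cmod (w a) * cmod (v a))"
      using E[of a] by (simp add: norm_mult mult_right_mono ac_simps)
  qed
  also have "\<dots> \<le> B * (sqrt (sq_norm n w) * sqrt (sq_norm n v))"
    unfolding sum_distrib_left[symmetric] sq_norm_def
    by (rule mult_left_mono[OF sum_mult_le_sqrt_sum_power2 B])
  finally show ?thesis .
qed

lemma sum_lessThan_shift: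
  fixes f :: "nat \<Rightarrow> 'a::comm_monoid_add"
  assumes "\<And>b. b < m \<Longrightarrow> f b = 0"
  shows "(\<Sum>b<n. f b) = (\<Sum>i<n. if m + i < n then f (m + i) else 0)"
proof (cases "m \<le> n")
  case True
  have "(\<Sum>i<n. if m + i < n then f (m + i) else 0) = (\<Sum>i\<in>{i\<in>{..<n}. m + i < n}. f (m + i))"
    using sum.inter_filter[of "{..<n}" "\<lambda>i. f (m + i)" "\<lambda>i. m + i < n"] by simp
  also have "{i\<in>{..<n}. m + i < n} = {0..<n - m}" by auto
  also have "(\<Sum>i\<in>{0..<n - m}. f (m + i)) = (\<Sum>b\<in>{0 + m..<(n - m) + m}. f b)"
    by (subst sum.shift_bounds_nat_ivl) (simp add: add.commute)
  also have "{0 + m..<(n - m) + m} = {m..<n}" using True by simp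
  also have "(\<Sum>b\<in>{m..<n}. f b) = (\<Sum>b<n. f b)"
    by (rule sum.mono_neutral_left, insert assms, auto)
  finally show ?thesis by simp
qed (use assms in simp)

lemma sq_norm_shift_le:
  "sq_norm n (\<lambda>a. if a + m < n \<and> P a then u (a + m) else 0) \<le> sq_norm n u"
proof -
  have "sq_norm n (\<lambda>a. if a + m < n \<and> P a then u (a + m) else 0)
      \<le> (\<Sum>a<n. if m + a < n then (cmod (u (m + a)))\<^sup>2 else 0)"
    unfolding sq_norm_def by (rule sum_mono) (auto simp: add.commute)
  also have "\<dots> = (\<Sum>a<n. if m + a < n then (if m \<le> m + a then (cmod (u (m + a)))\<^sup>2 else 0) else 0)"
    by (intro sum.cong) auto
  also have "\<dots> = (\<Sum>b<n. if m \<le> b then (cmod (u b))\<^sup>2 else 0)"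
    by (rule sum_lessThan_shift[symmetric]) simp
  also have "\<dots> \<le> sq_norm n u"
    unfolding sq_norm_def by (rule sum_mono) auto
  finally show ?thesis .
qed

lemma conj_transpose_carrier [simp]: "U \<in> carrier_mat n m \<Longrightarrow> conj_transpose U \<in> carrier_mat m n"
  unfolding conj_transpose_def by auto

lemma index_conj_transpose [simp]:
  "i < dim_col U \<Longrightarrow> j < dim_row U \<Longrightarrow> conj_transpose U $$ (i,j) = cnj (U $$ (j,i))"
  "dim_row (conj_transpose U) = dim_col U" "dim_col (conj_transpose U) = dim_row U"
  unfolding conj_transpose_def by auto

lemma conj_transpose_conj_transpose [simp]: "conj_transpose (conj_transpose U) = U"
  by (rule eq_matI) auto

lemma conj_transpose_one [simp]: "conj_transpose (1\<^sub>m n) = 1\<^sub>m n"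
  by (rule eq_matI) auto

lemma conj_transpose_mult:
  assumes A: "A \<in> carrier_mat n k" and C: "C \<in> carrier_mat k m"
  shows "conj_transpose (A * C) = conj_transpose C * conj_transpose A"
  by (rule eq_matI) (use A C in \<open>auto simp: scalar_prod_def cnj_sum mult.commute\<close>)

lemma index_mult_mat_vec_sum:
  "A \<in> carrier_mat n n \<Longrightarrow> x \<in> carrier_vec n \<Longrightarrow> k < n \<Longrightarrow> (A *\<^sub>v x) $ k = (\<Sum>j<n. A $$ (k,j) * x $ j)"
  by (simp add: scalar_prod_def atLeast0LessThan)

lemma index_mult_mat_sum:
  assumes "A \<in> carrier_mat n k" "C \<in> carrier_mat k m" "i < n" "l < m"
  shows "(A * C) $$ (i,l) = (\<Sum>j<k. A $$ (i,j) * C $$ (j,l))"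
  using assms by (simp add: scalar_prod_def atLeast0LessThan)

lemma sum_index_mult_assoc:
  fixes A C :: "'a::comm_ring_1 mat"
  assumes A: "A \<in> carrier_mat n n" and C: "C \<in> carrier_mat n n" and i: "i < n"
  shows "(\<Sum>j<n. A $$ (i,j) * (\<Sum>l<n. C $$ (j,l) * z l)) = (\<Sum>l<n. (A * C) $$ (i,l) * z l)"
proof -
  have "(\<Sum>j<n. A $$ (i,j) * (\<Sum>l<n. C $$ (j,l) * z l)) = (\<Sum>l<n. \<Sum>j<n. A $$ (i,j) * C $$ (j,l) * z l)"
    by (subst sum.swap) (simp add: sum_distrib_left mult.assoc)
  also have "\<dots> = (\<Sum>l<n. (A * C) $$ (i,l) * z l)"
    by (intro sum.cong refl) (simp add: index_mult_mat_sum[OF A C i] sum_distrib_right del: index_mult_mat)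
  finally show ?thesis .
qed

lemma sum_one_mat_index:
  fixes v :: "nat \<Rightarrow> 'a::semiring_1"
  shows "i < n \<Longrightarrow> (\<Sum>j<n. 1\<^sub>m n $$ (i,j) * v j) = v i"
  by (simp add: if_distrib[of "\<lambda>x. x * _"] sum.If_cases)

lemma sum_cnj_mult_swap:
  "(\<Sum>i<n. cnj (\<Sum>k<n. U $$ (i,k) * z k) * y i) = (\<Sum>k<n. cnj (z k) * (\<Sum>i<n. cnj (U $$ (i,k)) * y i))"
proof -
  have "(\<Sum>i<n. cnj (\<Sum>k<n. U $$ (i,k) * z k) * y i) = (\<Sum>i<n. \<Sum>k<n. cnj (z k) * (cnj (U $$ (i,k)) * y i))"
    by (simp add: cnj_sum sum_distrib_right sum_distrib_left ac_simps)
  also have "\<dots> = (\<Sum>k<n. cnj (z k) * (\<Sum>i<n. cnj (U $$ (i,k)) * y i))"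
    by (subst sum.swap) (simp add: sum_distrib_left)
  finally show ?thesis .
qed

definition quad_form :: "nat \<Rightarrow> complex mat \<Rightarrow> (nat \<Rightarrow> complex) \<Rightarrow> complex" where
  "quad_form n H v = (\<Sum>i<n. cnj (v i) * (\<Sum>j<n. H $$ (i,j) * v j))"

lemma quad_form_change_var:
  assumes U: "U \<in> carrier_mat n n" and H: "H \<in> carrier_mat n n"
  shows "quad_form n H (\<lambda>i. \<Sum>k<n. U $$ (i,k) * z k) = quad_form n (conj_transpose U * H * U) z"
proof -
  have HU: "H * U \<in> carrier_mat n n" using U H by auto
  have "quad_form n H (\<lambda>i. \<Sum>k<n. U $$ (i,k) * z k)
      = (\<Sum>i<n. cnj (\<Sum>k<n. U $$ (i,k) * z k) * (\<Sum>l<n. (H * U) $$ (i,l) * z l))"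
    unfolding quad_form_def by (intro sum.cong refl) (simp add: sum_index_mult_assoc[OF H U])
  also have "\<dots> = (\<Sum>k<n. cnj (z k) * (\<Sum>i<n. conj_transpose U $$ (k,i) * (\<Sum>l<n. (H * U) $$ (i,l) * z l)))"
    unfolding sum_cnj_mult_swap using U by (intro sum.cong refl) simp
  also have "\<dots> = (\<Sum>k<n. cnj (z k) * (\<Sum>l<n. (conj_transpose U * (H * U)) $$ (k,l) * z l))"
    by (intro sum.cong refl) (simp add: sum_index_mult_assoc[OF conj_transpose_carrier[OF U] HU])
  also have "conj_transpose U * (H * U) = conj_transpose U * H * U"
    using U H by (simp add: assoc_mult_mat[of _ n n _ n _ n])
  finally show ?thesis unfolding quad_form_def .
qed

lemma quad_form_one: "quad_form n (1\<^sub>m n) v = of_real (sq_norm n v)"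
  unfolding quad_form_def of_real_sq_norm by (intro sum.cong refl) (simp add: sum_one_mat_index del: index_one_mat)

section \<open>Powers and exponential of Jordan matrices\<close>

lemma jordan_matrix_entries:
  fixes n_as :: "(nat \<times> 'a::field) list"
  defines "J \<equiv> jordan_matrix n_as" and "n \<equiv> sum_list (map fst n_as)"
  shows "a < n \<Longrightarrow> b < n \<Longrightarrow> b \<noteq> a \<Longrightarrow> b \<noteq> Suc a \<Longrightarrow> J $$ (a,b) = 0"
    and "Suc a < n \<Longrightarrow> J $$ (a, Suc a) = 0 \<or> J $$ (a, Suc a) = 1"
    and "Suc a < n \<Longrightarrow> J $$ (a, Suc a) = 1 \<Longrightarrow> J $$ (a,a) = J $$ (Suc a, Suc a)"
  unfolding J_def n_def
proof (induct n_as arbitrary: a b)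
  case Nil
  { case 1 thus ?case by simp }
  { case 2 thus ?case by simp }
  { case 3 thus ?case by simp }
next
  case (Cons ka n_as)
  obtain k lam where ka: "ka = (k,lam)" by force
  have J: "jordan_matrix (ka # n_as) = four_block_mat (jordan_block k lam)
      (0\<^sub>m k (sum_list (map fst n_as))) (0\<^sub>m (sum_list (map fst n_as)) k) (jordan_matrix n_as)"
    unfolding ka by (rule jordan_matrix_Cons)
  { case 1 thus ?case unfolding J using Cons(1)[of "a - k" "b - k"] by (auto simp: ka) }
  { case 2 thus ?case unfolding J using Cons(2)[of "a - k"] by (auto simp: ka Suc_diff_le) }
  { case 3 thus ?case unfolding J using Cons(3)[of "a - k"]
      by (auto simp: ka Suc_diff_le split: if_splits) }
qed

text \<open>\<open>jordan_chain J a b\<close>: the indices \<open>a \<le> b\<close> lie in the same Jordan block of \<open>J\<close>.\<close>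

definition jordan_chain :: "'a::{zero,one} mat \<Rightarrow> nat \<Rightarrow> nat \<Rightarrow> bool" where
  "jordan_chain J a b \<longleftrightarrow> a \<le> b \<and> (\<forall>c. a \<le> c \<and> c < b \<longrightarrow> J $$ (c, Suc c) = 1)"

lemma jordan_chain_0: "jordan_chain J a 0 \<longleftrightarrow> a = 0"
  unfolding jordan_chain_def by auto

lemma jordan_chain_Suc:
  "jordan_chain J a (Suc b) \<longleftrightarrow> a = Suc b \<or> (jordan_chain J a b \<and> J $$ (b, Suc b) = 1)"
  unfolding jordan_chain_def by (auto simp: less_Suc_eq le_Suc_eq)

locale jordan_shaped =
  fixes J :: "'a::field mat" and n :: nat
  assumes carrier: "J \<in> carrier_mat n n"
    and off_band: "\<And>a b. a < n \<Longrightarrow> b < n \<Longrightarrow> b \<noteq> a \<Longrightarrow> b \<noteq> Suc a \<Longrightarrow> J $$ (a,b) = 0"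
    and superdiag: "\<And>a. Suc a < n \<Longrightarrow> J $$ (a, Suc a) = 0 \<or> J $$ (a, Suc a) = 1"
    and superdiag_one: "\<And>a. Suc a < n \<Longrightarrow> J $$ (a, Suc a) = 1 \<Longrightarrow> J $$ (a,a) = J $$ (Suc a, Suc a)"

lemma jordan_shaped_jordan_matrix:
  "jordan_shaped (jordan_matrix n_as) (sum_list (map fst n_as))"
  by (unfold_locales, insert jordan_matrix_entries[of _ n_as], auto)

context jordan_shaped
begin

lemma jordan_chain_diag: "jordan_chain J a b \<Longrightarrow> b < n \<Longrightarrow> J $$ (b,b) = J $$ (a,a)"
proof (induct b)
  case (Suc b)
  then show ?case using superdiag_one[of b] by (auto simp: jordan_chain_Suc)
qed (simp add: jordan_chain_0)

lemma index_mult_right: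
  assumes M: "M \<in> carrier_mat n n" and a: "a < n" and b: "b < n"
  shows "(M * J) $$ (a,b) = M $$ (a,b) * J $$ (b,b) + (if b = 0 then 0 else M $$ (a,b-1) * J $$ (b-1,b))"
proof -
  let ?g = "\<lambda>c. M $$ (a,c) * J $$ (c,b)" and ?S = "{b} \<union> (if b = 0 then {} else {b - 1})"
  have "(M * J) $$ (a,b) = (\<Sum>c\<in>{..<n}. ?g c)"
    using M carrier a b by (simp add: scalar_prod_def atLeast0LessThan)
  also have "\<dots> = (\<Sum>c\<in>?S. ?g c)"
    by (rule sum.mono_neutral_right, insert b off_band, auto split: if_splits)
  also have "\<dots> = ?g b + (if b = 0 then 0 else ?g (b - 1))"
    by (cases b, auto)
  finally show ?thesis .
qed

end

lemma choose_pow_Suc: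
  fixes x :: "'a::comm_ring_1"
  shows "of_nat (k choose Suc m) * x ^ (k - Suc m) * x + of_nat (k choose m) * x ^ (k - m)
    = of_nat (Suc k choose Suc m) * x ^ (k - m)"
proof (cases "m < k")
  case True
  then have "k - m = Suc (k - Suc m)" by auto
  then show ?thesis by (simp add: algebra_simps)
qed (auto simp: binomial_eq_0 le_less)

lemma (in jordan_shaped) pow_mat_index:
  assumes a: "a < n" and b: "b < n"
  shows "(J ^\<^sub>m k) $$ (a,b)
    = (if jordan_chain J a b then of_nat (k choose (b - a)) * J $$ (a,a) ^ (k - (b - a)) else 0)"
  using b
proof (induct k arbitrary: b)
  case 0
  then show ?case using carrier a by (auto simp: jordan_chain_def binomial_eq_0)
next
  case (Suc k)
  note IH = Suc.hyps and b = Suc.prems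
  let ?x = "J $$ (a,a)"
  have step: "(J ^\<^sub>m Suc k) $$ (a,b) = (J ^\<^sub>m k) $$ (a,b) * J $$ (b,b)
      + (if b = 0 then 0 else (J ^\<^sub>m k) $$ (a,b-1) * J $$ (b-1,b))"
    using index_mult_right[of "J ^\<^sub>m k", OF _ a b] carrier by auto
  show ?case
  proof (cases b)
    case 0
    then show ?thesis using step IH b a by (auto simp: jordan_chain_0)
  next
    case b': (Suc b')
    consider "a = b" | "jordan_chain J a b'" "J $$ (b', b) = 1" | "\<not> jordan_chain J a b"
      using b' jordan_chain_Suc[of J a b'] by blast
    then show ?thesis
    proof cases
      case 1
      have "jordan_chain J a b" "\<not> jordan_chain J a b'" using 1 b' by (auto simp: jordan_chain_def)
      then show ?thesis using step IH[OF b] IH[of b'] b b' 1 by simp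
    next
      case 2
      define m where "m = b' - a"
      have ba: "b - a = Suc m" and b'a: "b' - a = m"
        using 2 b' unfolding m_def jordan_chain_def by auto
      have chain: "jordan_chain J a b" using 2 b' by (simp add: jordan_chain_Suc)
      have diag: "J $$ (b,b) = ?x" using jordan_chain_diag[OF chain b] .
      have "(J ^\<^sub>m Suc k) $$ (a,b)
          = of_nat (k choose Suc m) * ?x ^ (k - Suc m) * ?x + of_nat (k choose m) * ?x ^ (k - m)"
        using step IH[OF b] IH[of b'] b b' 2 chain diag ba b'a by simp
      also have "\<dots> = of_nat (Suc k choose (b - a)) * ?x ^ (Suc k - (b - a))"
        unfolding choose_pow_Suc ba by simp
      finally show ?thesis using chain by simp
    next
      case 3
      have "(J ^\<^sub>m k) $$ (a,b') * J $$ (b',b) = 0"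
        using IH[of b'] b superdiag[of b'] 3 b' by (auto simp: jordan_chain_Suc)
      then show ?thesis using step IH[OF b] 3 b' by simp
    qed
  qed
qed


lemma smult_pow_mat:
  fixes A :: "'a::comm_ring_1 mat"
  assumes A: "A \<in> carrier_mat n n"
  shows "(c \<cdot>\<^sub>m A) ^\<^sub>m k = (c ^ k) \<cdot>\<^sub>m (A ^\<^sub>m k)"
proof (induct k)
  case (Suc k)
  have Ak: "A ^\<^sub>m k \<in> carrier_mat n n" using A by auto
  have "(c \<cdot>\<^sub>m A) ^\<^sub>m Suc k = (c ^ k) \<cdot>\<^sub>m (A ^\<^sub>m k) * (c \<cdot>\<^sub>m A)" using Suc by simp
  also have "\<dots> = (c ^ k) \<cdot>\<^sub>m (A ^\<^sub>m k * (c \<cdot>\<^sub>m A))"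
    by (rule mult_smult_assoc_mat[OF Ak smult_carrier_mat[OF A]])
  also have "A ^\<^sub>m k * (c \<cdot>\<^sub>m A) = c \<cdot>\<^sub>m (A ^\<^sub>m k * A)"
    by (rule mult_smult_distrib[OF Ak A])
  also have "(c ^ k) \<cdot>\<^sub>m (c \<cdot>\<^sub>m (A ^\<^sub>m k * A)) = (c ^ Suc k) \<cdot>\<^sub>m (A ^\<^sub>m Suc k)"
    by (intro eq_matI) (auto simp: mult.commute)
  finally show ?case .
qed (auto intro: eq_matI)

lemma sums_exp_choose:
  fixes s x :: "'a::{real_normed_field,banach}"
  shows "(\<lambda>k. s ^ k / fact k * (of_nat (k choose m) * x ^ (k - m))) sums (s ^ m / fact m * exp (s * x))"
proof -
  let ?f = "\<lambda>k. s ^ k / fact k * (of_nat (k choose m) * x ^ (k - m))"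
  have shift: "?f (j + m) = s ^ m / fact m * ((s * x) ^ j /\<^sub>R fact j)" for j
  proof -
    have "of_nat ((j + m) choose m) = (fact (j + m) / (fact m * fact j) :: 'a)"
      by (simp add: binomial_fact)
    then show ?thesis by (simp add: scaleR_conv_of_real power_add power_mult_distrib field_simps)
  qed
  have "(\<lambda>j. ?f (j + m)) sums (s ^ m / fact m * exp (s * x))"
    unfolding shift by (rule sums_mult, rule exp_converges)
  then show ?thesis using sums_zero_iff_shift[of m ?f] by (simp add: binomial_eq_0)
qed

definition jordan_exp_index :: "complex mat \<Rightarrow> complex \<Rightarrow> nat \<Rightarrow> nat \<Rightarrow> complex" where
  "jordan_exp_index J s a b =
     (if jordan_chain J a b then s ^ (b - a) / fact (b - a) * exp (s * J $$ (a,a)) else 0)"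

lemma sums_jordan_exp_index:
  fixes J :: "complex mat"
  assumes J: "jordan_shaped J n" and a: "a < n" and b: "b < n"
  shows "(\<lambda>k. ((s \<cdot>\<^sub>m J) ^\<^sub>m k) $$ (a,b) / fact k) sums jordan_exp_index J s a b"
proof -
  have carrier: "J \<in> carrier_mat n n" using J by (rule jordan_shaped.carrier)
  have "((s \<cdot>\<^sub>m J) ^\<^sub>m k) $$ (a,b) / fact k = (if jordan_chain J a b
      then s ^ k / fact k * (of_nat (k choose (b - a)) * J $$ (a,a) ^ (k - (b - a))) else 0)" for k
    using smult_pow_mat[OF carrier, of s k] jordan_shaped.pow_mat_index[OF J a b, of k] a b carrier
    by auto
  then show ?thesis
    unfolding jordan_exp_index_def using sums_exp_choose[of s "b - a" "J $$ (a,a)"] by auto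
qed

lemma sum_exp_series_le_exp:
  assumes "0 \<le> (t::real)"
  shows "(\<Sum>m<n. t ^ m / fact m) \<le> exp t"
proof -
  have "(\<lambda>m. t ^ m / fact m) sums exp t"
    using exp_converges[of t] by (simp add: divide_inverse mult.commute scaleR_conv_of_real)
  then show ?thesis using assms sum_le_suminf[of "\<lambda>m. t ^ m / fact m" "{..<n}"]
    by (simp add: sums_iff)
qed

text \<open>This is \<open>exp (s J) = (\<Sum>m. s\<^sup>m / m! \<cdot> D N\<^sub>m)\<close> with \<open>D = exp (s diag J)\<close> and
  \<open>N\<^sub>m\<close> the partial shift by \<open>m\<close> inside the Jordan blocks.\<close>

lemma jordan_exp_bilinear_superdiagonals:
  "(\<Sum>a<n. \<Sum>b<n. cnj (w a) * jordan_exp_index J s a b * u b)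
    = (\<Sum>m<n. s ^ m / fact m * (\<Sum>a<n. cnj (w a) * exp (s * J $$ (a,a))
        * (if a + m < n \<and> jordan_chain J a (a + m) then u (a + m) else 0)))"
  (is "_ = (\<Sum>m<n. ?c m * (\<Sum>a<n. cnj (w a) * ?E a * ?S m a))")
proof -
  have row: "(\<Sum>b<n. jordan_exp_index J s a b * u b) = (\<Sum>m<n. ?c m * (?E a * ?S m a))" for a
    by (subst sum_lessThan_shift[of a])
      (auto simp: jordan_exp_index_def jordan_chain_def intro!: sum.cong)
  have "(\<Sum>a<n. \<Sum>b<n. cnj (w a) * jordan_exp_index J s a b * u b)
      = (\<Sum>a<n. cnj (w a) * (\<Sum>b<n. jordan_exp_index J s a b * u b))"
    by (simp add: sum_distrib_left mult.assoc)
  also have "\<dots> = (\<Sum>a<n. \<Sum>m<n. cnj (w a) * (?c m * (?E a * ?S m a)))"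
    by (simp add: row sum_distrib_left)
  also have "\<dots> = (\<Sum>m<n. ?c m * (\<Sum>a<n. cnj (w a) * ?E a * ?S m a))"
    by (subst sum.swap) (simp add: sum_distrib_left ac_simps)
  finally show ?thesis .
qed

lemma jordan_exp_bilinear_le:
  fixes J :: "complex mat" and t \<kappa> :: real
  assumes J: "jordan_shaped J n" and t: "0 \<le> t"
    and \<kappa>: "\<And>a. a < n \<Longrightarrow> \<kappa> \<le> Re (J $$ (a,a))"
  shows "cmod (\<Sum>a<n. \<Sum>b<n. cnj (w a) * jordan_exp_index J (- of_real t) a b * u b)
    \<le> exp ((1 - \<kappa>) * t) * (sqrt (sq_norm n w) * sqrt (sq_norm n u))"
proof -
  define s where "s = - complex_of_real t"
  define E where "E a = exp (s * J $$ (a,a))" for a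
  define S where "S m a = (if a + m < n \<and> jordan_chain J a (a + m) then u (a + m) else 0)" for m a
  define K where "K = sqrt (sq_norm n w) * sqrt (sq_norm n u)"
  have E_le: "cmod (E a) \<le> exp (- t * \<kappa>)" if "a < n" for a
    using \<kappa>[OF that] t by (simp add: E_def s_def norm_exp_eq_Re mult_left_mono)
  have inner: "cmod (\<Sum>a<n. cnj (w a) * E a * S m a) \<le> exp (- t * \<kappa>) * K" for m
  proof -
    have "sqrt (sq_norm n (S m)) \<le> sqrt (sq_norm n u)"
      unfolding S_def by (rule real_sqrt_le_mono[OF sq_norm_shift_le])
    then have "sqrt (sq_norm n w) * sqrt (sq_norm n (S m)) \<le> K"
      unfolding K_def by (rule mult_left_mono) simp
    have "cmod (\<Sum>a<n. cnj (w a) * E a * S m a)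
        \<le> exp (- t * \<kappa>) * (sqrt (sq_norm n w) * sqrt (sq_norm n (S m)))"
      by (rule cmod_sum_le_sqrt_sq_norm) (use E_le in simp_all)
    also have "\<dots> \<le> exp (- t * \<kappa>) * K"
      using \<open>sqrt (sq_norm n w) * sqrt (sq_norm n (S m)) \<le> K\<close> by (rule mult_left_mono) simp
    finally show ?thesis .
  qed
  have "cmod (\<Sum>m<n. s ^ m / fact m * (\<Sum>a<n. cnj (w a) * E a * S m a))
      \<le> (\<Sum>m<n. t ^ m / fact m * (exp (- t * \<kappa>) * K))"
  proof (rule order.trans[OF norm_sum sum_mono])
    fix m
    have cm: "cmod (s ^ m / fact m) = t ^ m / fact m" using t by (simp add: s_def norm_divide norm_power)
    show "cmod (s ^ m / fact m * (\<Sum>a<n. cnj (w a) * E a * S m a)) \<le> t ^ m / fact m * (exp (- t * \<kappa>) * K)"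
      unfolding norm_mult cm by (rule mult_left_mono[OF inner]) (simp add: t)
  qed
  also have "\<dots> = (\<Sum>m<n. t ^ m / fact m) * (exp (- t * \<kappa>) * K)"
    by (simp add: sum_distrib_right)
  also have "\<dots> \<le> exp t * (exp (- t * \<kappa>) * K)"
    using sum_exp_series_le_exp[OF t] by (rule mult_right_mono) (simp add: K_def)
  also have "\<dots> = exp ((1 - \<kappa>) * t) * K"
    by (simp add: exp_add[symmetric] algebra_simps)
  finally show ?thesis
    unfolding jordan_exp_bilinear_superdiagonals s_def[symmetric] E_def[symmetric] S_def[symmetric] K_def .
qed

section \<open>Rayleigh bounds for Hermitian matrices\<close>

lemma unitary_normalize_corthogonal:
  fixes ws :: "complex vec list"
  assumes ws: "set ws \<subseteq> carrier_vec n" and orth: "corthogonal ws" and len: "length ws = n"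
  defines "U \<equiv> mat n n (\<lambda>(k,i). of_real (1 / sqrt (Re (ws ! i \<bullet>c ws ! i))) * (ws ! i $ k))"
  shows "conj_transpose U * U = 1\<^sub>m n"
proof (rule eq_matI)
  define r where "r i = 1 / sqrt (Re (ws ! i \<bullet>c ws ! i))" for i
  have U: "U \<in> carrier_mat n n" unfolding U_def by auto
  fix i j assume "i < dim_row (1\<^sub>m n)" and "j < dim_col (1\<^sub>m n)"
  then have i: "i < n" and j: "j < n" by auto
  have "(conj_transpose U * U) $$ (i,j) = (\<Sum>k<n. of_real (r i * r j) * (ws ! j $ k * cnj (ws ! i $ k)))"
    using i j U unfolding index_mult_mat_sum[OF conj_transpose_carrier[OF U] U i j]
    by (intro sum.cong refl) (auto simp: U_def r_def)
  also have "\<dots> = of_real (r i * r j) * (ws ! j \<bullet>c ws ! i)"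
  proof -
    have "ws ! i \<in> carrier_vec n" using ws i len by auto
    then show ?thesis by (simp add: scalar_prod_def sum_distrib_left atLeast0LessThan)
  qed
  also have "\<dots> = 1\<^sub>m n $$ (i,j)"
  proof (cases "i = j")
    case True
    have "ws ! i \<bullet>c ws ! i \<noteq> 0" using corthogonalD[OF orth] i len by auto
    moreover have "ws ! i \<bullet>c ws ! i \<ge> 0" by (rule conjugate_square_ge_0_vec)
    ultimately have pos: "0 < Re (ws ! i \<bullet>c ws ! i)"
      and real: "ws ! i \<bullet>c ws ! i = of_real (Re (ws ! i \<bullet>c ws ! i))"
      by (auto simp: less_eq_complex_def complex_eq_iff)
    have "r i * r i * Re (ws ! i \<bullet>c ws ! i) = 1"
      unfolding r_def using pos by (simp add: real_sqrt_mult[symmetric] field_simps)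
    then show ?thesis using True i real by (metis index_one_mat(1) of_real_1 of_real_mult)
  qed (use corthogonalD[OF orth] i j len in auto)
  finally show "(conj_transpose U * U) $$ (i,j) = 1\<^sub>m n $$ (i,j)" .
qed (auto simp: U_def)

lemma unitary_completion:
  fixes x :: "complex vec"
  assumes x: "x \<in> carrier_vec n" and x0: "x \<noteq> 0\<^sub>v n"
  obtains U \<alpha> where "U \<in> carrier_mat n n" "conj_transpose U * U = 1\<^sub>m n" "U * conj_transpose U = 1\<^sub>m n"
    "\<And>k. k < n \<Longrightarrow> U $$ (k,0) = \<alpha> * x $ k"
proof -
  interpret cof_vec_space n "TYPE(complex)" .
  define b where "b = basis_completion x"
  note bc = basis_completion[OF x x0, folded b_def]
  have n0: "0 < n" using x x0 by (cases n) auto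
  from bc(6,7) n0 obtain vs where bv: "b = x # vs" by (cases b) auto
  define ws where "ws = gram_schmidt n b"
  note gs = gram_schmidt_result[OF bc(2) bc(4) bc(5) ws_def]
  have len: "length ws = n" using gs bc by auto
  have ws0: "ws ! 0 = x" using gram_schmidt_hd[OF x, of vs] len n0
    unfolding ws_def bv by (cases "gram_schmidt n (x # vs)") auto
  define U where "U = mat n n (\<lambda>(k,i). of_real (1 / sqrt (Re (ws ! i \<bullet>c ws ! i))) * (ws ! i $ k))"
  have U: "U \<in> carrier_mat n n" unfolding U_def by auto
  have UU: "conj_transpose U * U = 1\<^sub>m n"
    unfolding U_def by (rule unitary_normalize_corthogonal[OF gs(3,2) len])
  show thesis
  proof
    show "U * conj_transpose U = 1\<^sub>m n"
      by (rule mat_mult_left_right_inverse[OF conj_transpose_carrier[OF U] U UU])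
    show "U $$ (k,0) = of_real (1 / sqrt (Re (ws ! 0 \<bullet>c ws ! 0))) * x $ k" if "k < n" for k
      unfolding U_def using that n0 ws0 by auto
  qed fact+
qed

lemma finite_Re_eigenvalues:
  assumes "(H :: complex mat) \<in> carrier_mat n n"
  shows "finite {Re c | c. eigenvalue H c}"
proof -
  have "char_poly H \<noteq> 0" using degree_monic_char_poly[OF assms] by auto
  then have "finite {c. eigenvalue H c}"
    using poly_roots_finite eigenvalue_root_char_poly[OF assms] by simp
  then show ?thesis by (simp add: setcompr_eq_image)
qed

lemma eigenvalue_exists:
  assumes "(H :: complex mat) \<in> carrier_mat n n" and "0 < n"
  obtains c where "eigenvalue H c"
proof -
  obtain as where "char_poly H = (\<Prod>a\<leftarrow>as. [:- a, 1:])" and "length as = n"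
    using char_poly_factorized[OF assms(1)] by auto
  with assms(2) obtain c where "poly (char_poly H) c = 0" by (cases as) (auto simp: poly_prod_list)
  then show thesis using that eigenvalue_root_char_poly[OF assms(1)] by simp
qed

lemma conj_transpose_unitary_conj:
  assumes U: "U \<in> carrier_mat n n" and H: "H \<in> carrier_mat n n" and herm: "conj_transpose H = H"
  shows "conj_transpose (conj_transpose U * H * U) = conj_transpose U * H * U"
proof -
  have UH: "conj_transpose U * H \<in> carrier_mat n n" using U H by auto
  have "conj_transpose (conj_transpose U * H * U) = conj_transpose U * (conj_transpose H * U)"
    using conj_transpose_mult[OF UH U] conj_transpose_mult[OF conj_transpose_carrier[OF U] H] by simp
  then show ?thesis using U H herm by (simp add: assoc_mult_mat[of _ n n _ n _ n])
qed

lemma unitary_conj_first_column: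
  assumes H: "H \<in> carrier_mat n n" and U: "U \<in> carrier_mat n n"
    and UU: "conj_transpose U * U = 1\<^sub>m n"
    and x: "x \<in> carrier_vec n" and Hx: "H *\<^sub>v x = e \<cdot>\<^sub>v x"
    and col: "\<And>k. k < n \<Longrightarrow> U $$ (k,0) = \<alpha> * x $ k" and i: "i < n"
  shows "(conj_transpose U * H * U) $$ (i,0) = (if i = 0 then e else 0)"
proof -
  have n: "0 < n" using i by simp
  have HU: "(H * U) $$ (k,0) = e * U $$ (k,0)" if k: "k < n" for k
  proof -
    have "(H * U) $$ (k,0) = \<alpha> * (\<Sum>l<n. H $$ (k,l) * x $ l)"
      unfolding index_mult_mat_sum[OF H U k n] by (simp add: col sum_distrib_left ac_simps)
    also have "(\<Sum>l<n. H $$ (k,l) * x $ l) = e * x $ k"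
      using arg_cong[OF Hx, of "\<lambda>v. v $ k"] H x k by (simp add: scalar_prod_def atLeast0LessThan)
    finally show ?thesis using col[OF k] by simp
  qed
  have "(conj_transpose U * H * U) $$ (i,0) = (conj_transpose U * (H * U)) $$ (i,0)"
    using U H by (simp add: assoc_mult_mat[of _ n n _ n _ n])
  also have "\<dots> = e * (\<Sum>k<n. conj_transpose U $$ (i,k) * U $$ (k,0))"
    using H U unfolding index_mult_mat_sum[OF conj_transpose_carrier[OF U] mult_carrier_mat[OF H U] i n]
    by (simp add: HU sum_distrib_left ac_simps del: index_mult_mat)
  also have "(\<Sum>k<n. conj_transpose U $$ (i,k) * U $$ (k,0)) = 1\<^sub>m n $$ (i,0)"
    unfolding UU[symmetric] by (rule index_mult_mat_sum[OF conj_transpose_carrier[OF U] U i n, symmetric])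
  finally show ?thesis using i by simp
qed

lemma hermitian_first_column_block:
  assumes B: "B \<in> carrier_mat (Suc m) (Suc m)" and herm: "conj_transpose B = B"
    and col: "\<And>i. i < Suc m \<Longrightarrow> B $$ (i,0) = (if i = 0 then e else 0)"
  defines "B' \<equiv> mat m m (\<lambda>(i,j). B $$ (Suc i, Suc j))"
  shows "B = four_block_mat (mat 1 1 (\<lambda>_. e)) (0\<^sub>m 1 m) (0\<^sub>m m 1) B'"
    and "conj_transpose B' = B'"
proof -
  have sym: "B $$ (j,i) = cnj (B $$ (i,j))" if "i < Suc m" "j < Suc m" for i j
    using arg_cong[OF herm, of "\<lambda>M. M $$ (j,i)"] B that by simp
  show "B = four_block_mat (mat 1 1 (\<lambda>_. e)) (0\<^sub>m 1 m) (0\<^sub>m m 1) B'"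
  proof (rule eq_matI)
    fix i j assume "i < dim_row (four_block_mat (mat 1 1 (\<lambda>_. e)) (0\<^sub>m 1 m) (0\<^sub>m m 1) B')"
      and "j < dim_col (four_block_mat (mat 1 1 (\<lambda>_. e)) (0\<^sub>m 1 m) (0\<^sub>m m 1) B')"
    then have i: "i < Suc m" and j: "j < Suc m" by (auto simp: B'_def)
    show "B $$ (i,j) = four_block_mat (mat 1 1 (\<lambda>_. e)) (0\<^sub>m 1 m) (0\<^sub>m m 1) B' $$ (i,j)"
      using col[OF i] col[OF j] sym[OF j, of 0] i j unfolding B'_def by (cases i; cases j) auto
  qed (use B in \<open>auto simp: B'_def\<close>)
  show "conj_transpose B' = B'"
  proof (rule eq_matI)
    fix i j assume "i < dim_row B'" "j < dim_col B'"
    then show "conj_transpose B' $$ (i,j) = B' $$ (i,j)"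
      using sym[of "Suc j" "Suc i"] by (simp add: B'_def)
  qed (simp_all add: B'_def)
qed

lemma similar_mat_wit_unitary_conj:
  assumes U: "U \<in> carrier_mat n n" and H: "H \<in> carrier_mat n n"
    and UU: "conj_transpose U * U = 1\<^sub>m n" and UU': "U * conj_transpose U = 1\<^sub>m n"
  shows "similar_mat_wit H (conj_transpose U * H * U) U (conj_transpose U)"
proof (rule similar_mat_witI[OF UU' UU _ H _ U conj_transpose_carrier[OF U]])
  have Ut: "conj_transpose U \<in> carrier_mat n n" using U by simp
  have "U * (conj_transpose U * H * U) = (U * (conj_transpose U * H)) * U"
    by (rule assoc_mult_mat[symmetric, OF U mult_carrier_mat[OF Ut H] U])
  also have "U * (conj_transpose U * H) = (U * conj_transpose U) * H"
    by (rule assoc_mult_mat[symmetric, OF U Ut H])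
  finally have "U * (conj_transpose U * H * U) = H * U" unfolding UU' using H by simp
  then have "U * (conj_transpose U * H * U) * conj_transpose U = H * (U * conj_transpose U)"
    by (simp add: assoc_mult_mat[OF H U Ut])
  then show "H = U * (conj_transpose U * H * U) * conj_transpose U" unfolding UU' using H by simp
qed (use U H in auto)

lemma hermitian_deflation:
  assumes H: "H \<in> carrier_mat (Suc m) (Suc m)" and herm: "conj_transpose H = H"
  obtains U e B' where "U \<in> carrier_mat (Suc m) (Suc m)"
    "conj_transpose U * U = 1\<^sub>m (Suc m)" "U * conj_transpose U = 1\<^sub>m (Suc m)"
    "conj_transpose U * H * U = four_block_mat (mat 1 1 (\<lambda>_. e)) (0\<^sub>m 1 m) (0\<^sub>m m 1) B'"
    "B' \<in> carrier_mat m m" "conj_transpose B' = B'"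
    "eigenvalue H e" "\<And>\<mu>. eigenvalue B' \<mu> \<Longrightarrow> eigenvalue H \<mu>"
proof -
  obtain e where ev: "eigenvalue H e" using eigenvalue_exists[OF H] by blast
  then obtain x where x: "x \<in> carrier_vec (Suc m)" "x \<noteq> 0\<^sub>v (Suc m)" "H *\<^sub>v x = e \<cdot>\<^sub>v x"
    using H unfolding eigenvalue_def eigenvector_def by auto
  obtain U \<alpha> where U: "U \<in> carrier_mat (Suc m) (Suc m)" and UU: "conj_transpose U * U = 1\<^sub>m (Suc m)"
    and UU': "U * conj_transpose U = 1\<^sub>m (Suc m)" and col: "\<And>k. k < Suc m \<Longrightarrow> U $$ (k,0) = \<alpha> * x $ k"
    using unitary_completion[OF x(1,2)] by blast
  define B where "B = conj_transpose U * H * U"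
  have B: "B \<in> carrier_mat (Suc m) (Suc m)" using U H by (auto simp: B_def)
  define B' where "B' = mat m m (\<lambda>(i,j). B $$ (Suc i, Suc j))"
  have block: "B = four_block_mat (mat 1 1 (\<lambda>_. e)) (0\<^sub>m 1 m) (0\<^sub>m m 1) B'"
    and herm': "conj_transpose B' = B'"
    using hermitian_first_column_block[OF B conj_transpose_unitary_conj[OF U H herm, folded B_def]]
      unitary_conj_first_column[OF H U UU x(1,3) col] unfolding B_def B'_def by auto
  have B': "B' \<in> carrier_mat m m" by (simp add: B'_def)
  have "char_poly H = char_poly B"
    using similar_mat_wit_unitary_conj[OF U H UU UU'] unfolding B_def
    by (intro char_poly_similar) (auto simp: similar_mat_def)
  also have "\<dots> = char_poly (mat 1 1 (\<lambda>_. e)) * char_poly B'"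
    unfolding block by (rule char_poly_four_block_zeros_col[OF _ _ B']) auto
  finally have eig: "eigenvalue H \<mu>" if "eigenvalue B' \<mu>" for \<mu>
    using that eigenvalue_root_char_poly[OF H] eigenvalue_root_char_poly[OF B'] by simp
  show thesis
    by (rule that[of U e B']) (use U UU UU' block B' herm' ev eig in \<open>simp_all add: B_def\<close>)
qed


lemma quad_form_four_block:
  assumes "B \<in> carrier_mat m m"
  shows "quad_form (Suc m) (four_block_mat (mat 1 1 (\<lambda>_. e)) (0\<^sub>m 1 m) (0\<^sub>m m 1) B) z
    = e * of_real ((cmod (z 0))\<^sup>2) + quad_form m B (\<lambda>k. z (Suc k))"
proof -
  have "quad_form (Suc m) (four_block_mat (mat 1 1 (\<lambda>_. e)) (0\<^sub>m 1 m) (0\<^sub>m m 1) B) z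
      = cnj (z 0) * (e * z 0) + quad_form m B (\<lambda>k. z (Suc k))"
    unfolding quad_form_def sum.lessThan_Suc_shift using assms by simp
  then show ?thesis unfolding complex_norm_square by (simp add: ac_simps)
qed

lemma quad_form_unitary_change:
  fixes v :: "nat \<Rightarrow> complex"
  assumes U: "U \<in> carrier_mat n n" and H: "H \<in> carrier_mat n n"
    and UU: "conj_transpose U * U = 1\<^sub>m n" and UU': "U * conj_transpose U = 1\<^sub>m n"
  defines "z \<equiv> \<lambda>k. \<Sum>i<n. conj_transpose U $$ (k,i) * v i"
  shows "quad_form n H v = quad_form n (conj_transpose U * H * U) z"
    and "sq_norm n v = sq_norm n z"
proof -
  have v: "quad_form n M v = quad_form n (conj_transpose U * M * U) z" if M: "M \<in> carrier_mat n n" for M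
  proof -
    have "v i = (\<Sum>k<n. U $$ (i,k) * z k)" if "i < n" for i
      unfolding z_def sum_index_mult_assoc[OF U conj_transpose_carrier[OF U] that] UU'
      by (rule sum_one_mat_index[OF that, symmetric])
    then have "quad_form n M v = quad_form n M (\<lambda>i. \<Sum>k<n. U $$ (i,k) * z k)"
      unfolding quad_form_def by (intro sum.cong refl) simp
    then show ?thesis using quad_form_change_var[OF U M] by simp
  qed
  show "quad_form n H v = quad_form n (conj_transpose U * H * U) z" by (rule v[OF H])
  have "conj_transpose U * 1\<^sub>m n * U = 1\<^sub>m n" using U UU by simp
  then show "sq_norm n v = sq_norm n z" using v[of "1\<^sub>m n"] by (simp add: quad_form_one)
qed

lemma Re_quad_form_bounds:
  assumes "H \<in> carrier_mat n n" and "conj_transpose H = H"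
    and "\<And>e. eigenvalue H e \<Longrightarrow> c \<le> Re e \<and> Re e \<le> C"
  shows "c * sq_norm n v \<le> Re (quad_form n H v) \<and> Re (quad_form n H v) \<le> C * sq_norm n v"
  using assms
proof (induct n arbitrary: H v)
  case 0
  then show ?case by (simp add: quad_form_def sq_norm_def)
next
  case (Suc m H v)
  obtain U e B where U: "U \<in> carrier_mat (Suc m) (Suc m)"
    and UU: "conj_transpose U * U = 1\<^sub>m (Suc m)" and UU': "U * conj_transpose U = 1\<^sub>m (Suc m)"
    and block: "conj_transpose U * H * U = four_block_mat (mat 1 1 (\<lambda>_. e)) (0\<^sub>m 1 m) (0\<^sub>m m 1) B"
    and B: "B \<in> carrier_mat m m" "conj_transpose B = B"
    and ev: "eigenvalue H e" and evB: "\<And>\<mu>. eigenvalue B \<mu> \<Longrightarrow> eigenvalue H \<mu>"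
    by (rule hermitian_deflation[OF Suc(2,3)]) blast
  define z where "z k = (\<Sum>i<Suc m. conj_transpose U $$ (k,i) * v i)" for k
  define z' where "z' k = z (Suc k)" for k
  have "quad_form (Suc m) H v = e * of_real ((cmod (z 0))\<^sup>2) + quad_form m B z'"
    using quad_form_unitary_change(1)[OF U Suc(2) UU UU', of v]
    unfolding block z_def[symmetric] quad_form_four_block[OF B(1)] z'_def .
  then have qf: "Re (quad_form (Suc m) H v) = Re e * (cmod (z 0))\<^sup>2 + Re (quad_form m B z')"
    by simp
  have sq: "sq_norm (Suc m) v = (cmod (z 0))\<^sup>2 + sq_norm m z'"
    using quad_form_unitary_change(2)[OF U Suc(2) UU UU', of v]
    unfolding z_def[symmetric] sq_norm_Suc z'_def .
  have evB': "\<And>\<mu>. eigenvalue B \<mu> \<Longrightarrow> c \<le> Re \<mu> \<and> Re \<mu> \<le> C"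
    using Suc(4) evB by blast
  have "c * (cmod (z 0))\<^sup>2 \<le> Re e * (cmod (z 0))\<^sup>2" "Re e * (cmod (z 0))\<^sup>2 \<le> C * (cmod (z 0))\<^sup>2"
    using Suc(4)[OF ev] by (auto intro: mult_right_mono)
  moreover note Suc(1)[OF B evB', of z']
  ultimately show ?case unfolding qf sq distrib_left by linarith
qed

lemma kappa_min_le_Re_eigenvalue:
  "H \<in> carrier_mat n n \<Longrightarrow> eigenvalue H e \<Longrightarrow> kappa_min H \<le> Re e"
  unfolding kappa_min_def by (rule Min_le[OF finite_Re_eigenvalues]) auto

lemma Re_eigenvalue_le_kappa_max:
  "H \<in> carrier_mat n n \<Longrightarrow> eigenvalue H e \<Longrightarrow> Re e \<le> kappa_max H"
  unfolding kappa_max_def by (rule Max_ge[OF finite_Re_eigenvalues]) auto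

lemma kappa_min_le_kappa_max:
  assumes "H \<in> carrier_mat n n" and "0 < n"
  shows "kappa_min H \<le> kappa_max H"
  using eigenvalue_exists[OF assms] kappa_min_le_Re_eigenvalue[OF assms(1)]
    Re_eigenvalue_le_kappa_max[OF assms(1)] by (meson order.trans)

lemma Re_quad_form_kappa_bounds:
  assumes "H \<in> carrier_mat n n" and "conj_transpose H = H"
  shows "kappa_min H * sq_norm n v \<le> Re (quad_form n H v)"
    and "Re (quad_form n H v) \<le> kappa_max H * sq_norm n v"
  using Re_quad_form_bounds[OF assms, of "kappa_min H" "kappa_max H" v]
    kappa_min_le_Re_eigenvalue[OF assms(1)] Re_eigenvalue_le_kappa_max[OF assms(1)] by auto

section \<open>The Gram matrix of an invertible matrix\<close>

lemma hermitian_gram: "Q \<in> carrier_mat n m \<Longrightarrow> conj_transpose (Q * conj_transpose Q) = Q * conj_transpose Q"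
  using conj_transpose_mult[OF _ conj_transpose_carrier] by simp

lemma quad_form_gram:
  assumes Q: "Q \<in> carrier_mat n n"
  shows "quad_form n (Q * conj_transpose Q) z = of_real (sq_norm n (\<lambda>k. \<Sum>i<n. conj_transpose Q $$ (k,i) * z i))"
proof -
  have "quad_form n (1\<^sub>m n) (\<lambda>k. \<Sum>i<n. conj_transpose Q $$ (k,i) * z i)
      = quad_form n (conj_transpose (conj_transpose Q) * 1\<^sub>m n * conj_transpose Q) z"
    by (rule quad_form_change_var) (use Q in simp_all)
  then show ?thesis using Q by (simp add: quad_form_one)
qed

lemma inverse_sum_index_mult:
  fixes A B :: "'a::comm_ring_1 mat"
  assumes A: "A \<in> carrier_mat n n" and B: "B \<in> carrier_mat n n" and BA: "B * A = 1\<^sub>m n"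
    and i: "i < n"
  shows "(\<Sum>k<n. B $$ (i,k) * (\<Sum>j<n. A $$ (k,j) * v j)) = v i"
  unfolding sum_index_mult_assoc[OF B A i] BA by (rule sum_one_mat_index[OF i])

lemma quad_form_eigenvector:
  assumes H: "H \<in> carrier_mat n n" and x: "x \<in> carrier_vec n" and Hx: "H *\<^sub>v x = e \<cdot>\<^sub>v x"
  shows "quad_form n H (\<lambda>j. x $ j) = e * of_real (sq_norm n (\<lambda>j. x $ j))"
proof -
  have "(\<Sum>j<n. H $$ (k,j) * x $ j) = e * x $ k" if "k < n" for k
    using arg_cong[OF Hx, of "\<lambda>y. y $ k"] x that unfolding index_mult_mat_vec_sum[OF H x that] by simp
  then have "quad_form n H (\<lambda>j. x $ j) = (\<Sum>j<n. cnj (x $ j) * (e * x $ j))"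
    unfolding quad_form_def by (intro sum.cong refl) simp
  also have "\<dots> = e * of_real (sq_norm n (\<lambda>j. x $ j))"
    by (simp add: of_real_sq_norm sum_distrib_left ac_simps)
  finally show ?thesis .
qed

lemma Re_eigenvalue_gram_pos:
  assumes Q: "Q \<in> carrier_mat n n" and Qi: "Qi \<in> carrier_mat n n" and QQi: "Q * Qi = 1\<^sub>m n"
    and ev: "eigenvalue (Q * conj_transpose Q) e"
  shows "0 < Re e"
proof -
  have H: "Q * conj_transpose Q \<in> carrier_mat n n" using Q by simp
  obtain x where x: "x \<in> carrier_vec n" "x \<noteq> 0\<^sub>v n" "(Q * conj_transpose Q) *\<^sub>v x = e \<cdot>\<^sub>v x"
    using ev H unfolding eigenvalue_def eigenvector_def by auto
  obtain i where i: "i < n" "x $ i \<noteq> 0" using x(1,2) by (metis carrier_vecD eq_vecI index_zero_vec)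
  define w where "w k = (\<Sum>j<n. conj_transpose Q $$ (k,j) * x $ j)" for k
  have "of_real (sq_norm n w) = e * of_real (sq_norm n (\<lambda>j. x $ j))"
    using quad_form_eigenvector[OF H x(1,3)] unfolding quad_form_gram[OF Q] w_def .
  then have "Re (of_real (sq_norm n w)) = Re (e * of_real (sq_norm n (\<lambda>j. x $ j)))" by simp
  then have eq: "sq_norm n w = Re e * sq_norm n (\<lambda>j. x $ j)" by simp
  have CQ: "conj_transpose Qi * conj_transpose Q = 1\<^sub>m n"
    using conj_transpose_mult[OF Q Qi] QQi by simp
  have xi: "x $ i = (\<Sum>k<n. conj_transpose Qi $$ (i,k) * w k)"
    unfolding w_def by (rule inverse_sum_index_mult[OF _ _ CQ i(1), symmetric]) (use Q Qi in simp_all)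
  have "\<exists>k<n. w k \<noteq> 0"
  proof (rule ccontr)
    assume "\<not> (\<exists>k<n. w k \<noteq> 0)"
    then have "x $ i = 0" unfolding xi by simp
    then show False using i(2) by simp
  qed
  then have "0 < sq_norm n w" using sq_norm_pos by blast
  moreover have "0 < sq_norm n (\<lambda>j. x $ j)" using i by (intro sq_norm_pos) simp_all
  ultimately show ?thesis using eq by (simp add: zero_less_mult_iff)
qed

lemma kappa_min_gram_pos:
  assumes Q: "Q \<in> carrier_mat n n" and Qi: "Qi \<in> carrier_mat n n" and QQi: "Q * Qi = 1\<^sub>m n"
    and n: "0 < n"
  shows "0 < kappa_min (Q * conj_transpose Q)"
proof -
  have H: "Q * conj_transpose Q \<in> carrier_mat n n" using Q by simp
  obtain e where "eigenvalue (Q * conj_transpose Q) e" using eigenvalue_exists[OF H n] .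
  then have "{Re c | c. eigenvalue (Q * conj_transpose Q) c} \<noteq> {}" by auto
  then show ?thesis unfolding kappa_min_def
    using Min_in[OF finite_Re_eigenvalues[OF H]] Re_eigenvalue_gram_pos[OF Q Qi QQi] by auto
qed

lemma one_le_kappa_ratio_gram:
  assumes Q: "Q \<in> carrier_mat n n" and Qi: "Qi \<in> carrier_mat n n" and QQi: "Q * Qi = 1\<^sub>m n"
    and n: "0 < n"
  shows "1 \<le> kappa_max (Q * conj_transpose Q) / kappa_min (Q * conj_transpose Q)"
  using kappa_min_gram_pos[OF assms] kappa_min_le_kappa_max[OF _ n, of "Q * conj_transpose Q"] Q
  by simp

lemma sq_norm_adjoint_le:
  assumes "Q \<in> carrier_mat n n"
  shows "sq_norm n (\<lambda>a. \<Sum>i<n. conj_transpose Q $$ (a,i) * y i) \<le> kappa_max (Q * conj_transpose Q) * sq_norm n y"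
  using Re_quad_form_kappa_bounds(2)[OF mult_carrier_mat[OF assms conj_transpose_carrier[OF assms]]
      hermitian_gram[OF assms], where v = y]
  unfolding quad_form_gram[OF assms] by simp

lemma mult_le_of_le_sqrt_mult:
  fixes k a b c :: real
  assumes le: "a \<le> sqrt b * sqrt c" and kc: "k * c \<le> a" and "0 \<le> a" "0 \<le> b" "0 \<le> c"
  shows "k * a \<le> b"
proof (cases "0 < k \<and> 0 < a")
  case True
  have "a * a \<le> b * c"
    using mult_mono[OF le le] assms(3-5) by (simp add: ac_simps)
  then have "k * (a * a) \<le> b * (k * c)" using True by (simp add: mult_left_mono ac_simps)
  also have "\<dots> \<le> b * a" using kc assms(4) by (rule mult_left_mono)
  finally show ?thesis using True by (simp add: ac_simps)
next
  case False
  then have "k * a \<le> 0" using assms(3) by (cases "0 < k") (auto simp: mult_nonpos_nonneg)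
  then show ?thesis using assms(4) by linarith
qed

lemma sq_norm_inverse_le:
  assumes Q: "Q \<in> carrier_mat n n" and Qi: "Qi \<in> carrier_mat n n" and QiQ: "Qi * Q = 1\<^sub>m n"
  shows "kappa_min (Q * conj_transpose Q) * sq_norm n (\<lambda>b. \<Sum>j<n. Qi $$ (b,j) * x j) \<le> sq_norm n x"
proof -
  let ?H = "Q * conj_transpose Q" and ?k = "kappa_min (Q * conj_transpose Q)"
  define u where "u b = (\<Sum>j<n. Qi $$ (b,j) * x j)" for b
  define v where "v j = (\<Sum>b<n. conj_transpose Qi $$ (j,b) * u b)" for j
  have CQ: "conj_transpose Q * conj_transpose Qi = 1\<^sub>m n"
    using conj_transpose_mult[OF Qi Q] QiQ by simp
  have "(\<Sum>i<n. conj_transpose Q $$ (k,i) * v i) = u k" if "k < n" for k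
    unfolding v_def by (rule inverse_sum_index_mult[OF _ _ CQ that]) (use Q Qi in simp_all)
  then have "quad_form n ?H v = of_real (sq_norm n u)"
    unfolding quad_form_gram[OF Q] sq_norm_def by simp
  then have kv: "?k * sq_norm n v \<le> sq_norm n u"
    using Re_quad_form_kappa_bounds(1)[OF mult_carrier_mat[OF Q conj_transpose_carrier[OF Q]]
      hermitian_gram[OF Q], where v = v] by simp
  have "of_real (sq_norm n u) = (\<Sum>j<n. cnj (x j) * v j)"
    unfolding of_real_sq_norm u_def sum_cnj_mult_swap v_def using Qi by (intro sum.cong refl) simp
  then have "sq_norm n u = cmod (\<Sum>j<n. cnj (x j) * v j)"
    by (metis norm_of_real abs_of_nonneg sq_norm_nonneg)
  also have "\<dots> \<le> sqrt (sq_norm n x) * sqrt (sq_norm n v)"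
    using cmod_sum_le_sqrt_sq_norm[of n "\<lambda>_. 1" 1 x v] by simp
  finally have "sq_norm n u \<le> sqrt (sq_norm n x) * sqrt (sq_norm n v)" .
  then show ?thesis unfolding u_def[symmetric] using kv by (rule mult_le_of_le_sqrt_mult) simp_all
qed

section \<open>The exponential of a real matrix\<close>

lemma map_mat_of_real_smult:
  "map_mat complex_of_real (c \<cdot>\<^sub>m A) = of_real c \<cdot>\<^sub>m map_mat complex_of_real A"
  by (rule eq_matI) auto

lemma index_mult_mat_triple_sum:
  assumes Q: "Q \<in> carrier_mat n n" and X: "X \<in> carrier_mat n n" and Qi: "Qi \<in> carrier_mat n n"
    and i: "i < n" and j: "j < n"
  shows "(Q * X * Qi) $$ (i,j) = (\<Sum>b<n. (\<Sum>a<n. Q $$ (i,a) * X $$ (a,b)) * Qi $$ (b,j))"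
  unfolding index_mult_mat_sum[OF mult_carrier_mat[OF Q X] Qi i j]
  by (intro sum.cong refl) (simp add: index_mult_mat_sum[OF Q X i])

lemma of_real_pow_mat_index_similar:
  fixes A :: "real mat" and c :: real
  assumes A: "A \<in> carrier_mat n n" and sim: "similar_mat_wit (map_mat complex_of_real A) J Q Qi"
    and i: "i < n" and j: "j < n"
  shows "complex_of_real (((c \<cdot>\<^sub>m A) ^\<^sub>m k) $$ (i,j))
    = (\<Sum>b<n. (\<Sum>a<n. Q $$ (i,a) * ((of_real c \<cdot>\<^sub>m J) ^\<^sub>m k) $$ (a,b)) * Qi $$ (b,j))"
proof -
  have "map_mat complex_of_real A \<in> carrier_mat n n" using A by auto
  from similar_mat_witD2[OF this sim] have J: "J \<in> carrier_mat n n" and Q: "Q \<in> carrier_mat n n"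
    and Qi: "Qi \<in> carrier_mat n n" by auto
  have cA: "c \<cdot>\<^sub>m A \<in> carrier_mat n n" using A by simp
  have "complex_of_real (((c \<cdot>\<^sub>m A) ^\<^sub>m k) $$ (i,j)) = map_mat complex_of_real ((c \<cdot>\<^sub>m A) ^\<^sub>m k) $$ (i,j)"
    using i j A by simp
  also have "map_mat complex_of_real ((c \<cdot>\<^sub>m A) ^\<^sub>m k) = (map_mat complex_of_real (c \<cdot>\<^sub>m A)) ^\<^sub>m k"
    by (rule of_real_hom.mat_hom_pow[OF cA])
  also have "\<dots> = Q * (of_real c \<cdot>\<^sub>m J) ^\<^sub>m k * Qi"
    unfolding map_mat_of_real_smult by (rule similar_mat_wit_pow_id[OF similar_mat_wit_smult[OF sim]])
  also have "\<dots> $$ (i,j) = (\<Sum>b<n. (\<Sum>a<n. Q $$ (i,a) * ((of_real c \<cdot>\<^sub>m J) ^\<^sub>m k) $$ (a,b)) * Qi $$ (b,j))"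
    by (rule index_mult_mat_triple_sum[OF Q _ Qi i j]) (use J in simp)
  finally show ?thesis .
qed

lemma of_real_mat_exp_index:
  fixes A :: "real mat" and c :: real
  assumes A: "A \<in> carrier_mat n n"
    and sim: "similar_mat_wit (map_mat complex_of_real A) J Q Qi"
    and J: "jordan_shaped J n" and i: "i < n" and j: "j < n"
  shows "complex_of_real (mat_exp (c \<cdot>\<^sub>m A) $$ (i,j))
     = (\<Sum>b<n. (\<Sum>a<n. Q $$ (i,a) * jordan_exp_index J (of_real c) a b) * Qi $$ (b,j))"
proof -
  define g where "g k = ((c \<cdot>\<^sub>m A) ^\<^sub>m k) $$ (i,j) / fact k" for k
  define S where "S = (\<Sum>b<n. (\<Sum>a<n. Q $$ (i,a) * jordan_exp_index J (of_real c) a b) * Qi $$ (b,j))"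
  have gk: "complex_of_real (g k)
      = (\<Sum>b<n. (\<Sum>a<n. Q $$ (i,a) * (((of_real c \<cdot>\<^sub>m J) ^\<^sub>m k) $$ (a,b) / fact k)) * Qi $$ (b,j))" for k
    unfolding g_def of_real_divide of_real_pow_mat_index_similar[OF A sim i j] sum_divide_distrib
    by (simp add: sum_divide_distrib[symmetric])
  have "(\<lambda>k. \<Sum>b<n. (\<Sum>a<n. Q $$ (i,a) * (((of_real c \<cdot>\<^sub>m J) ^\<^sub>m k) $$ (a,b) / fact k))
      * Qi $$ (b,j)) sums S"
    unfolding S_def
  proof (intro sums_sum sums_mult2 sums_mult)
    fix a b assume "a \<in> {..<n}" "b \<in> {..<n}"
    then show "(\<lambda>k. ((of_real c \<cdot>\<^sub>m J) ^\<^sub>m k) $$ (a,b) / fact k) sums jordan_exp_index J (of_real c) a b"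
      using sums_jordan_exp_index[OF J] by auto
  qed
  then have "(\<lambda>k. complex_of_real (g k)) sums S" unfolding gk .
  then have "g sums Re S" and im: "(\<lambda>k. 0) sums Im S"
    unfolding sums_complex_iff by auto
  moreover have "S = of_real (Re S)" using sums_unique[OF im] by (simp add: complex_eq_iff)
  moreover have "mat_exp (c \<cdot>\<^sub>m A) $$ (i,j) = suminf g" unfolding mat_exp_def g_def using i j A by simp
  ultimately show ?thesis unfolding S_def by (simp add: sums_iff)
qed

lemma eigenvalue_jordan_diag:
  fixes n_as :: "(nat \<times> 'a::field) list"
  assumes sim: "similar_mat A (jordan_matrix n_as)" and A: "A \<in> carrier_mat n n" and a: "a < n"
  shows "eigenvalue A (jordan_matrix n_as $$ (a,a))"
proof -
  let ?J = "jordan_matrix n_as"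
  have J: "?J \<in> carrier_mat n n"
    using sim A unfolding similar_mat_def by (auto dest: similar_mat_witD2[OF A])
  have "upper_triangular ?J"
    unfolding upper_triangular_def using jordan_matrix_upper_triangular[of _ n_as] by auto
  then have cp: "char_poly ?J = (\<Prod>x\<leftarrow>diag_mat ?J. [:- x, 1:])" by (rule char_poly_upper_triangular[OF J])
  have "?J $$ (a,a) \<in> set (diag_mat ?J)" unfolding diag_mat_def using a J by auto
  then have "poly (char_poly ?J) (?J $$ (a,a)) = 0" unfolding cp poly_prod_list
    by (auto simp: prod_list_zero_iff)
  then show ?thesis unfolding eigenvalue_root_char_poly[OF A] char_poly_similar[OF sim] .
qed

lemma scalar_prod_self_sq_norm:
  "x \<in> carrier_vec n \<Longrightarrow> sq_norm n (\<lambda>i. complex_of_real (x $ i)) = x \<bullet> x"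
  unfolding sq_norm_def scalar_prod_def by (simp add: power2_eq_square atLeast0LessThan)

lemma op_norm_le:
  assumes E: "E \<in> carrier_mat n n" and n: "0 < n"
    and B: "\<And>x y. x \<in> carrier_vec n \<Longrightarrow> y \<in> carrier_vec n \<Longrightarrow> x \<bullet> x = 1 \<Longrightarrow> y \<bullet> y = 1
      \<Longrightarrow> (E *\<^sub>v x) \<bullet> y \<le> B"
  shows "op_norm E \<le> B"
  unfolding op_norm_def
proof (rule cSup_least)
  have "unit_vec n 0 \<bullet> unit_vec n 0 = (1::real)" using n by simp
  then have "(E *\<^sub>v unit_vec n 0) \<bullet> unit_vec n 0 \<in> {(E *\<^sub>v x) \<bullet> y | x y. x \<in> carrier_vec (dim_col E)
      \<and> y \<in> carrier_vec (dim_row E) \<and> x \<bullet> x = 1 \<and> y \<bullet> y = 1}"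
    using E by (intro CollectI exI[of _ "unit_vec n 0"]) auto
  then show "{(E *\<^sub>v x) \<bullet> y | x y. x \<in> carrier_vec (dim_col E) \<and> y \<in> carrier_vec (dim_row E)
      \<and> x \<bullet> x = 1 \<and> y \<bullet> y = 1} \<noteq> {}"
    by blast
qed (use E B in auto)


lemma of_real_bilinear_similar:
  fixes E :: "real mat" and x y :: "real vec"
  assumes E: "E \<in> carrier_mat n n" and x: "x \<in> carrier_vec n" and y: "y \<in> carrier_vec n"
    and Q: "Q \<in> carrier_mat n n"
    and E_index: "\<And>i j. i < n \<Longrightarrow> j < n \<Longrightarrow>
      complex_of_real (E $$ (i,j)) = (\<Sum>b<n. (\<Sum>a<n. Q $$ (i,a) * M a b) * Qi $$ (b,j))"
  shows "complex_of_real ((E *\<^sub>v x) \<bullet> y) = (\<Sum>a<n. \<Sum>b<n.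
      cnj (\<Sum>i<n. conj_transpose Q $$ (a,i) * of_real (y $ i)) * M a b * (\<Sum>j<n. Qi $$ (b,j) * of_real (x $ j)))"
proof -
  define u where "u b = (\<Sum>j<n. Qi $$ (b,j) * of_real (x $ j))" for b
  define R where "R a = (\<Sum>b<n. M a b * u b)" for a
  have row: "(\<Sum>j<n. complex_of_real (E $$ (i,j)) * of_real (x $ j)) = (\<Sum>a<n. Q $$ (i,a) * R a)"
    if i: "i < n" for i
  proof -
    have "(\<Sum>j<n. complex_of_real (E $$ (i,j)) * of_real (x $ j))
        = (\<Sum>j<n. \<Sum>b<n. (\<Sum>a<n. Q $$ (i,a) * M a b) * (Qi $$ (b,j) * of_real (x $ j)))"
      using E_index[OF i] by (simp add: sum_distrib_right mult.assoc)
    also have "\<dots> = (\<Sum>b<n. (\<Sum>a<n. Q $$ (i,a) * M a b) * u b)"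
      unfolding u_def by (subst sum.swap) (simp add: sum_distrib_left)
    also have "\<dots> = (\<Sum>a<n. Q $$ (i,a) * R a)"
      unfolding R_def by (simp add: sum_distrib_left sum_distrib_right mult.assoc) (rule sum.swap)
    finally show ?thesis .
  qed
  have "complex_of_real ((E *\<^sub>v x) \<bullet> y) = (\<Sum>i<n. (\<Sum>j<n. complex_of_real (E $$ (i,j)) * of_real (x $ j)) * of_real (y $ i))"
    using E x y by (simp add: scalar_prod_def atLeast0LessThan)
  also have "\<dots> = (\<Sum>i<n. (\<Sum>a<n. Q $$ (i,a) * R a) * of_real (y $ i))"
    by (intro sum.cong refl) (simp add: row)
  also have "\<dots> = (\<Sum>a<n. (\<Sum>i<n. Q $$ (i,a) * of_real (y $ i)) * R a)"
    by (simp add: sum_distrib_right sum_distrib_left ac_simps) (rule sum.swap)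
  also have "\<dots> = (\<Sum>a<n. cnj (\<Sum>i<n. conj_transpose Q $$ (a,i) * of_real (y $ i)) * R a)"
    using Q by (simp add: cnj_sum)
  finally show ?thesis by (simp add: R_def u_def sum_distrib_left mult.assoc)
qed


lemma jordan_transformsE:
  assumes "Q \<in> jordan_transforms A" and "A \<in> carrier_mat n n"
  obtains n_as Qi where "similar_mat_wit (map_mat complex_of_real A) (jordan_matrix n_as) Q Qi"
    "jordan_matrix n_as \<in> carrier_mat n n" "Q \<in> carrier_mat n n" "Qi \<in> carrier_mat n n"
    "Q * Qi = 1\<^sub>m n" "Qi * Q = 1\<^sub>m n"
proof -
  obtain n_as Qi where sim: "similar_mat_wit (map_mat complex_of_real A) (jordan_matrix n_as) Q Qi"
    using assms(1) unfolding jordan_transforms_def by auto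
  have "map_mat complex_of_real A \<in> carrier_mat n n" using assms(2) by simp
  then show thesis using that[OF sim] similar_mat_witD2[OF _ sim] by auto
qed

lemma jordan_transforms_nonempty:
  assumes "A \<in> carrier_mat n n"
  shows "jordan_transforms A \<noteq> {}"
proof -
  have A: "map_mat complex_of_real A \<in> carrier_mat n n" using assms by simp
  obtain as where "char_poly (map_mat complex_of_real A) = (\<Prod>a\<leftarrow>as. [:- a, 1:])"
    using char_poly_factorized[OF A] by auto
  then obtain n_as where "jordan_nf (map_mat complex_of_real A) n_as" using jordan_nf_exists[OF A] by auto
  then obtain P Pi where "similar_mat_wit (map_mat complex_of_real A) (jordan_matrix n_as) P Pi"
    unfolding jordan_nf_def similar_mat_def by auto
  then show ?thesis unfolding jordan_transforms_def by auto
qed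

lemma kappa_re_min_le_jordan_diag:
  assumes A: "A \<in> carrier_mat n n"
    and sim: "similar_mat_wit (map_mat complex_of_real A) (jordan_matrix n_as) Q Qi" and a: "a < n"
  shows "kappa_re_min A \<le> Re (jordan_matrix n_as $$ (a,a))"
proof -
  have Ac: "map_mat complex_of_real A \<in> carrier_mat n n" using A by simp
  have "eigenvalue (map_mat complex_of_real A) (jordan_matrix n_as $$ (a,a))"
    using sim by (intro eigenvalue_jordan_diag[OF _ Ac a]) (auto simp: similar_mat_def)
  then show ?thesis unfolding kappa_re_min_def by (intro Min_le[OF finite_Re_eigenvalues[OF Ac]]) auto
qed

lemma sqrt_sq_norm_transforms_le:
  fixes x y :: "real vec"
  assumes Q: "Q \<in> carrier_mat n n" and Qi: "Qi \<in> carrier_mat n n"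
    and QQi: "Q * Qi = 1\<^sub>m n" and QiQ: "Qi * Q = 1\<^sub>m n" and n: "0 < n"
    and x: "x \<in> carrier_vec n" "x \<bullet> x = 1" and y: "y \<in> carrier_vec n" "y \<bullet> y = 1"
  shows "sqrt (sq_norm n (\<lambda>a. \<Sum>i<n. conj_transpose Q $$ (a,i) * of_real (y $ i)))
      * sqrt (sq_norm n (\<lambda>b. \<Sum>j<n. Qi $$ (b,j) * of_real (x $ j)))
    \<le> sqrt (kappa_max (Q * conj_transpose Q) / kappa_min (Q * conj_transpose Q))"
proof -
  let ?H = "Q * conj_transpose Q"
  have kmin: "0 < kappa_min ?H" by (rule kappa_min_gram_pos[OF Q Qi QQi n])
  have kmax: "kappa_min ?H \<le> kappa_max ?H" using kappa_min_le_kappa_max[OF _ n] Q by simp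
  have "sqrt (sq_norm n (\<lambda>a. \<Sum>i<n. conj_transpose Q $$ (a,i) * of_real (y $ i)))
      * sqrt (sq_norm n (\<lambda>b. \<Sum>j<n. Qi $$ (b,j) * of_real (x $ j)))
    \<le> sqrt (kappa_max ?H) * sqrt (1 / kappa_min ?H)"
  proof (rule mult_mono)
    show "sqrt (sq_norm n (\<lambda>a. \<Sum>i<n. conj_transpose Q $$ (a,i) * of_real (y $ i))) \<le> sqrt (kappa_max ?H)"
      using sq_norm_adjoint_le[OF Q, of "\<lambda>i. of_real (y $ i)"] scalar_prod_self_sq_norm[OF y(1)] y(2)
      by simp
    show "sqrt (sq_norm n (\<lambda>b. \<Sum>j<n. Qi $$ (b,j) * of_real (x $ j))) \<le> sqrt (1 / kappa_min ?H)"
      using sq_norm_inverse_le[OF Q Qi QiQ, of "\<lambda>j. of_real (x $ j)"] scalar_prod_self_sq_norm[OF x(1)] x(2) kmin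
      by (simp add: field_simps)
  qed (use kmin kmax in simp_all)
  then show ?thesis by (simp add: real_sqrt_divide)
qed

lemma op_norm_mat_exp_le_jordan_transform:
  fixes A :: "real mat" and t :: real
  assumes A: "A \<in> carrier_mat n n" and n: "0 < n" and t: "0 \<le> t" and QJ: "Q \<in> jordan_transforms A"
  shows "op_norm (mat_exp ((- t) \<cdot>\<^sub>m A))
    \<le> sqrt (kappa_max (Q * conj_transpose Q) / kappa_min (Q * conj_transpose Q)) * exp ((1 - kappa_re_min A) * t)"
proof -
  obtain n_as Qi where sim: "similar_mat_wit (map_mat complex_of_real A) (jordan_matrix n_as) Q Qi"
    and J: "jordan_matrix n_as \<in> carrier_mat n n" and Q: "Q \<in> carrier_mat n n" and Qi: "Qi \<in> carrier_mat n n"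
    and QQi: "Q * Qi = 1\<^sub>m n" and QiQ: "Qi * Q = 1\<^sub>m n"
    using jordan_transformsE[OF QJ A] by blast
  have shaped: "jordan_shaped (jordan_matrix n_as) n"
    using jordan_shaped_jordan_matrix[of n_as] carrier_matD(1)[OF J] by simp
  define E where "E = mat_exp ((- t) \<cdot>\<^sub>m A)"
  have E: "E \<in> carrier_mat n n" unfolding E_def mat_exp_def using A by simp
  show ?thesis unfolding E_def[symmetric]
  proof (rule op_norm_le[OF E n])
    fix x y :: "real vec"
    assume x: "x \<in> carrier_vec n" and y: "y \<in> carrier_vec n" and xx: "x \<bullet> x = 1" and yy: "y \<bullet> y = 1"
    define u where "u b = (\<Sum>j<n. Qi $$ (b,j) * of_real (x $ j))" for b
    define w where "w a = (\<Sum>i<n. conj_transpose Q $$ (a,i) * of_real (y $ i))" for a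
    have "complex_of_real ((E *\<^sub>v x) \<bullet> y)
        = (\<Sum>a<n. \<Sum>b<n. cnj (w a) * jordan_exp_index (jordan_matrix n_as) (- of_real t) a b * u b)"
      unfolding u_def w_def
      by (rule of_real_bilinear_similar[OF E x y Q])
        (use of_real_mat_exp_index[OF A sim shaped, of _ _ "- t"] in \<open>simp add: E_def\<close>)
    then have "(E *\<^sub>v x) \<bullet> y
        \<le> cmod (\<Sum>a<n. \<Sum>b<n. cnj (w a) * jordan_exp_index (jordan_matrix n_as) (- of_real t) a b * u b)"
      by (metis Re_complex_of_real complex_Re_le_cmod)
    also have "\<dots> \<le> exp ((1 - kappa_re_min A) * t) * (sqrt (sq_norm n w) * sqrt (sq_norm n u))"
      by (rule jordan_exp_bilinear_le[OF shaped t kappa_re_min_le_jordan_diag[OF A sim]])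
    also have "\<dots> \<le> exp ((1 - kappa_re_min A) * t)
        * sqrt (kappa_max (Q * conj_transpose Q) / kappa_min (Q * conj_transpose Q))"
      unfolding u_def w_def
      by (rule mult_left_mono[OF sqrt_sq_norm_transforms_le[OF Q Qi QQi QiQ n x xx y yy]]) simp
    finally show "(E *\<^sub>v x) \<bullet> y
        \<le> sqrt (kappa_max (Q * conj_transpose Q) / kappa_min (Q * conj_transpose Q)) * exp ((1 - kappa_re_min A) * t)"
      by (simp add: mult.commute)
  qed
qed

lemma le_sqrt_Inf_mult:
  fixes R :: "real set"
  assumes R: "R \<noteq> {}" and nonneg: "\<And>r. r \<in> R \<Longrightarrow> 0 \<le> r" and C: "0 < C"
    and bound: "\<And>r. r \<in> R \<Longrightarrow> N \<le> sqrt r * C"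
  shows "N \<le> sqrt (Inf R) * C"
proof (cases "N \<le> 0")
  case True
  have "0 \<le> Inf R" using R nonneg by (intro cInf_greatest) auto
  then show ?thesis using True C by (simp add: order.trans)
next
  case False
  have "(N / C)\<^sup>2 \<le> r" if r: "r \<in> R" for r
  proof -
    have "N / C \<le> sqrt r" using bound[OF r] C by (simp add: field_simps)
    then have "(N / C)\<^sup>2 \<le> (sqrt r)\<^sup>2" using False C by (intro power_mono) auto
    then show ?thesis using nonneg[OF r] by simp
  qed
  then have "(N / C)\<^sup>2 \<le> Inf R" using R by (intro cInf_greatest) auto
  then have "N / C \<le> sqrt (Inf R)" by (rule real_le_rsqrt)
  then show ?thesis using C by (simp add: field_simps)
qed

theorem lemma6p2:
  fixes A0 :: "real mat" and d :: nat and t :: real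
  assumes "A0 \<in> carrier_mat d d" and "0 < d" and "0 \<le> t"
  shows "op_norm (mat_exp ((- t) \<cdot>\<^sub>m A0))
           \<le> sqrt (L_const A0) * exp ((1 - kappa_re_min A0) * t)"
  unfolding L_const_def
proof (rule le_sqrt_Inf_mult)
  let ?R = "{kappa_max (Q * conj_transpose Q) / kappa_min (Q * conj_transpose Q) | Q. Q \<in> jordan_transforms A0}"
  show "?R \<noteq> {}" using jordan_transforms_nonempty[OF assms(1)] by auto
  show "0 \<le> r" if rR: "r \<in> ?R" for r
  proof -
    obtain Q where QJ: "Q \<in> jordan_transforms A0"
      and r: "r = kappa_max (Q * conj_transpose Q) / kappa_min (Q * conj_transpose Q)"
      using rR by blast
    obtain Qi where "Q \<in> carrier_mat d d" "Qi \<in> carrier_mat d d" "Q * Qi = 1\<^sub>m d"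
      using jordan_transformsE[OF QJ assms(1)] by metis
    then show ?thesis using one_le_kappa_ratio_gram[OF _ _ _ assms(2)] unfolding r by fastforce
  qed
  show "0 < exp ((1 - kappa_re_min A0) * t)" by simp
  show "op_norm (mat_exp ((- t) \<cdot>\<^sub>m A0)) \<le> sqrt r * exp ((1 - kappa_re_min A0) * t)" if "r \<in> ?R" for r
    using that op_norm_mat_exp_le_jordan_transform[OF assms] by auto
qed

end
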